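(* Let $0\le\lambda<\gamma\le\delta$ and let $\mathfrak{f}=\mathfrak{s}+\overline{\mathfrak{t}}\in\mathcal{R}_H^0(\gamma,\delta,\lambda)$. Let $$pc(r)=(-\delta-2\gamma+\lambda)r^3+(3\delta+6\gamma-3\lambda)r^2+(-3\delta-7\gamma+4\lambda)r+\delta+\gamma.$$ Then $pc(r)=0$ has a unique real root $r_c$ in $(0,1)$, and $\mathfrak{f}$ is fully convex in $|z|<r_c$.
   Context: Let $\mathcal{U}=\{z\in\mathbb{C}:|z|<1\}$. $\mathcal{H}^0$ denotes the class of complex-valued harmonic functions $\mathfrak{f}=\mathfrak{s}+\overline{\mathfrak{t}}$ on $\mathcal{U}$, where $\mathfrak{s}(z)=z+\sum_{m\ge2}a_mz^m$ and $\mathfrak{t}(z)=\sum_{m\ge2}b_mz^m$ are analytic in $\mathcal{U}$. For real $0\le\lambda<\gamma\le\delta$, $\mathcal{R}_H^0(\gamma,\delta,\lambda)$ is the class of $\mathfrak{f}=\mathfrak{s}+\overline{\mathfrak{t}}\in\mathcal{H}^0$ such that for all $z\in\mathcal{U}$, $\mathrm{Re}\left[\gamma\mathfrak{s}'(z)+\delta z\mathfrak{s}''(z)+\frac{\delta-\gamma}{2}z^2\mathfrak{s}'''(z)-\lambda\right]>\left|\gamma\mathfrak{t}'(z)+\delta z\mathfrak{t}''(z)+\frac{\delta-\gamma}{2}z^2\mathfrak{t}'''(z)\right|$. A harmonic function $\mathfrak{f}$ is fully convex in the disk $|z|<R$ if it maps every circle $|z|=\rho$, $0<\rho<R$, in a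 one-to-one manner onto a convex curve (equivalently, for each $0<r<R$ the function $\mathfrak{f}(rz)/r$ maps every circle $|z|=\rho<1$ one-to-one onto a convex curve). *)

theory Defs
  imports "HOL-Complex_Analysis.Complex_Analysis"
begin

definition H0 :: "(complex \<Rightarrow> complex) \<Rightarrow> (complex \<Rightarrow> complex) \<Rightarrow> bool" where
  "H0 s t \<longleftrightarrow> s holomorphic_on ball 0 1 \<and> t holomorphic_on ball 0 1 \<and>
     s 0 = 0 \<and> deriv s 0 = 1 \<and> t 0 = 0 \<and> deriv t 0 = 0"

definition harm :: "(complex \<Rightarrow> complex) \<Rightarrow> (complex \<Rightarrow> complex) \<Rightarrow> complex \<Rightarrow> complex" where
  "harm s t z = s z + cnj (t z)"

definition Lop :: "real \<Rightarrow> real \<Rightarrow> (complex \<Rightarrow> complex) \<Rightarrow> complex \<Rightarrow> complex" where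
  "Lop \<gamma> \<delta> g z = of_real \<gamma> * deriv g z + of_real \<delta> * z * (deriv ^^ 2) g z
      + of_real ((\<delta> - \<gamma>) / 2) * z\<^sup>2 * (deriv ^^ 3) g z"

definition RH0 :: "real \<Rightarrow> real \<Rightarrow> real \<Rightarrow> (complex \<Rightarrow> complex) \<Rightarrow> (complex \<Rightarrow> complex) \<Rightarrow> bool" where
  "RH0 \<gamma> \<delta> lam s t \<longleftrightarrow> H0 s t \<and>
     (\<forall>z\<in>ball 0 1. Re (Lop \<gamma> \<delta> s z - of_real lam) > cmod (Lop \<gamma> \<delta> t z))"

definition convex_curve :: "complex set \<Rightarrow> bool" where
  "convex_curve C \<longleftrightarrow> (\<exists>K. convex K \<and> bounded K \<and> interior K \<noteq> {} \<and> C = frontier K)"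

definition fully_convex_in :: "(complex \<Rightarrow> complex) \<Rightarrow> real \<Rightarrow> bool" where
  "fully_convex_in f R \<longleftrightarrow> (\<forall>\<rho>. 0 < \<rho> \<and> \<rho> < R \<longrightarrow>
      inj_on f (sphere 0 \<rho>) \<and> convex_curve (f ` sphere 0 \<rho>))"

definition pc :: "real \<Rightarrow> real \<Rightarrow> real \<Rightarrow> real \<Rightarrow> real" where
  "pc \<gamma> \<delta> lam r = (- \<delta> - 2*\<gamma> + lam) * r^3 + (3*\<delta> + 6*\<gamma> - 3*lam) * r^2
      + (- 3*\<delta> - 7*\<gamma> + 4*lam) * r + \<delta> + \<gamma>"

end

(* Along the circle |z| = rho the image curve phi |-> f (rho e^(i phi)) of f = s + conj t has
   velocity i D with D = z s' - conj (z t'), and the argument of D grows at the rate Re (N / D),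
   where N = z s' + z^2 s'' + conj (z t' + z^2 t''). If
   |z s' - z| + |z^2 s''| + |z t'| + |z^2 t''| < rho on the circle, then Re (D / z) > 0, so D turns
   exactly once around the origin, and Re (N conj D) > 0, so it turns monotonically. Hence every
   normal line of the curve is a strict supporting line, and the circle is mapped one-to-one onto
   the boundary of the convex hull of its image.

   The smallness condition comes from coefficient bounds: Caratheodory's inequality applied to
   Lop s - lam + eps Lop t, with a unimodular eps, gives |a_n| + |b_n| <= (gamma - lam) / (gamma + delta)
   for n >= 2, and sum_{n>=2} n^2 rho^n = rho^2 (rho^2 - 3 rho + 4) / (1 - rho)^3 turns the
   condition into pc rho > 0, which holds below the unique root of pc in (0, 1). *)

theory Submission
  imports Defs "HOL-Library.Periodic_Fun"
begin

section \<open>The polynomial pc\<close>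

lemma pc_eq: "pc \<gamma> \<delta> lam r = (\<delta> + \<gamma>) * (1 - r)^3 - (\<gamma> - lam) * (r * (r^2 - 3*r + 4))"
  unfolding pc_def by (simp add: power2_eq_square power3_eq_cube algebra_simps)

lemma strict_mono_cubic: "strict_mono (\<lambda>x::real. x * (x^2 - 3*x + 4))"
proof (rule strict_monoI)
  fix x y :: real assume "x < y"
  have "(y - x) * ((x - 1)^2 + (y - 1)^2 + (x + y - 2)^2 + 2) > 0"
    using \<open>x < y\<close> by (intro mult_pos_pos) (auto intro: add_nonneg_pos)
  also have "(y - x) * ((x - 1)^2 + (y - 1)^2 + (x + y - 2)^2 + 2)
      = 2 * (y * (y^2 - 3*y + 4) - x * (x^2 - 3*x + 4))"
    by (simp add: power2_eq_square algebra_simps)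
  finally show "x * (x^2 - 3*x + 4) < y * (y^2 - 3*y + 4)" by simp
qed

lemma pc_strict_decreasing:
  assumes "lam < \<gamma>" "0 \<le> \<delta> + \<gamma>" "x < y" "y \<le> 1"
  shows "pc \<gamma> \<delta> lam y < pc \<gamma> \<delta> lam x"
proof -
  have "(\<delta> + \<gamma>) * (1 - y)^3 \<le> (\<delta> + \<gamma>) * (1 - x)^3"
    using assms by (intro mult_left_mono power_mono) auto
  moreover have "(\<gamma> - lam) * (x * (x^2 - 3*x + 4)) < (\<gamma> - lam) * (y * (y^2 - 3*y + 4))"
    using assms strict_monoD[OF strict_mono_cubic, of x y] by (intro mult_strict_left_mono) auto
  ultimately show ?thesis unfolding pc_eq by linarith
qed

lemma pc_unique_root:
  assumes "0 \<le> lam" "lam < \<gamma>" "\<gamma> \<le> \<delta>"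
  shows "\<exists>!r. 0 < r \<and> r < 1 \<and> pc \<gamma> \<delta> lam r = 0"
proof -
  have "pc \<gamma> \<delta> lam 1 < 0" "0 < pc \<gamma> \<delta> lam 0"
    using assms by (simp_all add: pc_def)
  moreover have "\<forall>x. 0 \<le> x \<and> x \<le> 1 \<longrightarrow> isCont (pc \<gamma> \<delta> lam) x"
    unfolding pc_def by (intro allI impI continuous_intros)
  ultimately obtain r where r: "0 \<le> r" "r \<le> 1" "pc \<gamma> \<delta> lam r = 0"
    using IVT2[of "pc \<gamma> \<delta> lam" 1 0 0] by auto
  with \<open>pc \<gamma> \<delta> lam 1 < 0\<close> \<open>0 < pc \<gamma> \<delta> lam 0\<close> have "0 < r \<and> r < 1 \<and> pc \<gamma> \<delta> lam r = 0"
    by (cases "r = 0 \<or> r = 1") auto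
  moreover have "y = r" if "0 < y \<and> y < 1 \<and> pc \<gamma> \<delta> lam y = 0" for y
    using that r pc_strict_decreasing[of lam \<gamma> \<delta> y r] pc_strict_decreasing[of lam \<gamma> \<delta> r y] assms
    by (cases y r rule: linorder_cases) auto
  ultimately show ?thesis by blast
qed

section \<open>Caratheodory's inequality\<close>

lemma higher_deriv_sum:
  fixes f :: "'i \<Rightarrow> complex \<Rightarrow> complex"
  assumes "finite I" "\<And>i. i \<in> I \<Longrightarrow> f i holomorphic_on S" "open S" "z \<in> S"
  shows "(deriv ^^ n) (\<lambda>w. \<Sum>i\<in>I. f i w) z = (\<Sum>i\<in>I. (deriv ^^ n) (f i) z)"
  using assms(1,2)
proof (induction I rule: finite_induct)
  case (insert x F)
  have "(deriv ^^ n) (\<lambda>w. f x w + (\<Sum>i\<in>F. f i w)) z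
      = (deriv ^^ n) (f x) z + (deriv ^^ n) (\<lambda>w. \<Sum>i\<in>F. f i w) z"
    by (rule higher_deriv_add[OF _ _ assms(3,4)]) (use insert in \<open>auto intro!: holomorphic_intros\<close>)
  with insert show ?case by simp
qed simp

lemma sum_powers_root_of_unity:
  assumes "0 < j" "j < n"
  shows "(\<Sum>k<n. (exp (2 * of_real pi * \<i> / of_nat n) ^ k) ^ j) = 0"
proof -
  define \<omega> where "\<omega> = exp (2 * of_real pi * \<i> * of_nat j / of_nat n)"
  have "exp (2 * of_real pi * \<i> / of_nat n) ^ j = \<omega>"
    unfolding \<omega>_def exp_of_nat_mult[symmetric] by (simp add: field_simps)
  moreover have "\<omega> \<noteq> 1"
    using assms complex_root_unity_eq_1[of n j] unfolding \<omega>_def by (auto dest: dvd_imp_le)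
  moreover have "\<omega> ^ n = 1"
    using assms complex_root_unity[of n j] unfolding \<omega>_def by simp
  ultimately show ?thesis
    by (simp add: power_mult[symmetric] mult.commute[of _ j] power_mult sum_gp_strict)
qed

lemma higher_deriv_mult_vanishing:
  assumes "f holomorphic_on S" "g holomorphic_on S" "open S" "z \<in> S"
    and "\<And>i. i < j \<Longrightarrow> (deriv ^^ i) f z = 0"
  shows "(deriv ^^ j) (\<lambda>w. f w * g w) z = (deriv ^^ j) f z * g z"
proof -
  have "(deriv ^^ j) (\<lambda>w. f w * g w) z
      = (\<Sum>i=0..j. of_nat (j choose i) * (deriv ^^ i) f z * (deriv ^^ (j - i)) g z)"
    by (rule higher_deriv_mult[OF assms(1-4)])
  also have "\<dots> = (\<Sum>i\<in>{j}. of_nat (j choose i) * (deriv ^^ i) f z * (deriv ^^ (j - i)) g z)"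
    using assms(5) by (intro sum.mono_neutral_right) auto
  finally show ?thesis by simp
qed

lemma higher_deriv_self_map_unit_disc:
  assumes hol: "\<omega> holomorphic_on ball 0 1" and into: "\<And>z. z \<in> ball 0 1 \<Longrightarrow> \<omega> z \<in> ball 0 1"
    and "0 < n"
  shows "cmod ((deriv ^^ n) \<omega> 0) \<le> fact n"
proof (rule tendsto_lowerbound)
  have "((\<lambda>r. fact n / r ^ n) \<longlongrightarrow> fact n / 1 ^ n) (at_left (1::real))"
    by (intro tendsto_intros) auto
  then show "((\<lambda>r. fact n / r ^ n) \<longlongrightarrow> fact n) (at_left (1::real))"
    by simp
  have "cmod ((deriv ^^ n) \<omega> 0) \<le> fact n * 1 / r ^ n" if "0 < r" "r < 1" for r
  proof (rule Cauchy_higher_deriv_bound[where y = 0])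
    show "\<omega> holomorphic_on ball 0 r"
      using hol by (rule holomorphic_on_subset) (use that in auto)
    show "continuous_on (cball 0 r) \<omega>"
      using holomorphic_on_imp_continuous_on[OF hol] by (rule continuous_on_subset) (use that in auto)
  qed (use that into \<open>0 < n\<close> in auto)
  then show "\<forall>\<^sub>F r in at_left 1. cmod ((deriv ^^ n) \<omega> 0) \<le> fact n / r ^ n"
    unfolding eventually_at_left_field by (intro exI[of _ 0]) auto
qed simp

lemma norm_diff_less_norm_add_iff: "cmod (a - b) < cmod (a + b) \<longleftrightarrow> Re (a * cnj b) > 0"
proof -
  have "(cmod (a + b))^2 - (cmod (a - b))^2 = 4 * Re (a * cnj b)"
    unfolding cmod_power2 by (simp add: power2_eq_square algebra_simps)
  moreover have "cmod (a - b) < cmod (a + b) \<longleftrightarrow> (cmod (a - b))^2 < (cmod (a + b))^2"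
    by (metis norm_ge_zero not_le power_mono_iff zero_less_numeral)
  ultimately show ?thesis by linarith
qed

text \<open>The Cayley transform (G - c) / (G + c) maps the disc into itself and vanishes to order n
  at 0, so the Cauchy estimate for it bounds the n-th derivative of G.\<close>

lemma higher_deriv_bound_Re_pos_flat:
  assumes hol: "G holomorphic_on ball 0 1" and pos: "\<And>z. z \<in> ball 0 1 \<Longrightarrow> Re (G z) > 0"
    and G0: "G 0 = of_real c" and "0 < n"
    and flat: "\<And>j. 0 < j \<Longrightarrow> j < n \<Longrightarrow> (deriv ^^ j) G 0 = 0"
  shows "cmod ((deriv ^^ n) G 0) \<le> 2 * c * fact n"
proof -
  have c: "c > 0" using pos[of 0] G0 by simp
  have nonzero: "G z + of_real c \<noteq> 0" if "z \<in> ball 0 1" for z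
    using pos[OF that] c by (auto simp: complex_eq_iff)
  define \<omega> where "\<omega> z = (G z - of_real c) / (G z + of_real c)" for z
  have hol_\<omega>: "\<omega> holomorphic_on ball 0 1"
    unfolding \<omega>_def using hol nonzero by (intro holomorphic_intros) auto
  have \<omega>_into: "\<omega> z \<in> ball 0 1" if "z \<in> ball 0 1" for z
    using norm_diff_less_norm_add_iff[of "G z" "of_real c"] pos[OF that] c nonzero[OF that]
    by (simp add: \<omega>_def norm_divide divide_less_eq)
  have hol_sum: "(\<lambda>z. G z + of_real c) holomorphic_on ball 0 1"
    using hol by (intro holomorphic_intros)
  have factor: "(deriv ^^ j) (\<lambda>z. G z - of_real c) 0 = (deriv ^^ j) (\<lambda>z. \<omega> z * (G z + of_real c)) 0" for j
  proof (rule higher_deriv_cong_ev)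
    show "\<forall>\<^sub>F z in nhds 0. G z - of_real c = \<omega> z * (G z + of_real c)"
      using eventually_nhds_in_open[of "ball 0 1" 0] nonzero
      by (auto elim!: eventually_mono simp: \<omega>_def)
  qed simp
  have product_rule: "(deriv ^^ j) (\<lambda>z. G z - of_real c) 0 = (deriv ^^ j) \<omega> 0 * (2 * of_real c)"
    if "\<And>i. i < j \<Longrightarrow> (deriv ^^ i) \<omega> 0 = 0" for j
    unfolding factor using higher_deriv_mult_vanishing[OF hol_\<omega> hol_sum, of 0 j] that G0 by simp
  have shifted: "(deriv ^^ j) (\<lambda>z. G z - of_real c) 0 = (deriv ^^ j) G 0" if "0 < j" for j
    using higher_deriv_diff[OF hol holomorphic_on_const, of 0 j] that by simp
  have \<omega>_flat: "(deriv ^^ j) \<omega> 0 = 0" if "j < n" for j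
    using that
  proof (induction j rule: less_induct)
    case (less j)
    have "(deriv ^^ j) (\<lambda>z. G z - of_real c) 0 = 0"
      using G0 shifted flat less.prems by (cases "j = 0") auto
    then show ?case using product_rule[of j] less c by simp
  qed
  have "cmod ((deriv ^^ n) G 0) = cmod ((deriv ^^ n) \<omega> 0) * (2 * c)"
    using product_rule[of n] \<omega>_flat shifted[OF \<open>0 < n\<close>] c by (simp add: norm_mult)
  also have "\<dots> \<le> fact n * (2 * c)"
    using higher_deriv_self_map_unit_disc[OF hol_\<omega> \<omega>_into \<open>0 < n\<close>] c by simp
  finally show ?thesis by (simp add: mult_ac)
qed

text \<open>Averaging F over the rotations by the n-th roots of unity kills the derivatives of
  orders 1 to n-1 at 0 and keeps the n-th.\<close>

lemma Caratheodory_higher_deriv: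
  assumes hol: "F holomorphic_on ball 0 1" and pos: "\<And>z. z \<in> ball 0 1 \<Longrightarrow> Re (F z) > 0"
    and F0: "F 0 = of_real c" and "0 < n"
  shows "cmod ((deriv ^^ n) F 0) \<le> 2 * c * fact n"
proof -
  define \<zeta> where "\<zeta> = exp (2 * of_real pi * \<i> / of_nat n)"
  have norm_\<zeta>: "cmod (\<zeta> ^ k) = 1" for k
    unfolding \<zeta>_def norm_power by (simp add: norm_exp_eq_Re)
  have rotate: "\<zeta> ^ k * z \<in> ball 0 1" if "z \<in> ball 0 1" for k z
    using that norm_\<zeta> by (simp add: norm_mult)
  define G where "G z = (\<Sum>k<n. F (\<zeta> ^ k * z)) / of_nat n" for z
  have hol_rot: "(\<lambda>z. F (\<zeta> ^ k * z)) holomorphic_on ball 0 1" for k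
    by (rule holomorphic_on_compose_gen[OF _ hol, unfolded o_def])
       (auto intro!: holomorphic_intros rotate)
  have hol_G: "G holomorphic_on ball 0 1"
    unfolding G_def using hol_rot \<open>0 < n\<close> by (intro holomorphic_intros) auto
  have pos_G: "Re (G z) > 0" if "z \<in> ball 0 1" for z
  proof -
    have "(\<Sum>k<n. Re (F (\<zeta> ^ k * z))) > 0"
      using \<open>0 < n\<close> pos rotate[OF that] by (intro sum_pos) auto
    then show ?thesis
      using \<open>0 < n\<close> by (simp add: G_def Re_divide_of_nat Re_sum)
  qed
  have G0: "G 0 = of_real c" unfolding G_def using \<open>0 < n\<close> F0 by simp
  have deriv_G: "(deriv ^^ j) G 0 = (deriv ^^ j) F 0 * (\<Sum>k<n. (\<zeta> ^ k) ^ j) / of_nat n" for j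
  proof -
    have "(deriv ^^ j) G 0 = (deriv ^^ j) (\<lambda>z. inverse (of_nat n) * (\<Sum>k<n. F (\<zeta> ^ k * z))) 0"
      unfolding G_def by (simp add: field_simps)
    also have "\<dots> = inverse (of_nat n) * (\<Sum>k<n. (deriv ^^ j) (\<lambda>z. F (\<zeta> ^ k * z)) 0)"
      using hol_rot
      by (simp add: higher_deriv_cmult[of _ "ball 0 1"] higher_deriv_sum[of _ _ "ball 0 1"] holomorphic_intros)
    also have "\<dots> = inverse (of_nat n) * (\<Sum>k<n. (\<zeta> ^ k) ^ j * (deriv ^^ j) F 0)"
      using higher_deriv_compose_linear[OF hol, of "ball 0 1"] norm_\<zeta> by (simp add: norm_mult)
    finally show ?thesis by (simp add: sum_distrib_left divide_inverse mult_ac)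
  qed
  have "(\<zeta> ^ k) ^ n = 1" for k
    using complex_root_unity[of n 1] \<open>0 < n\<close>
    by (simp add: \<zeta>_def power_mult[symmetric] mult.commute[of k] power_mult)
  then have "(deriv ^^ n) G 0 = (deriv ^^ n) F 0"
    using \<open>0 < n\<close> by (simp add: deriv_G)
  moreover have "(deriv ^^ j) G 0 = 0" if "0 < j" "j < n" for j
    using sum_powers_root_of_unity[OF that] by (simp add: deriv_G \<zeta>_def)
  ultimately show ?thesis
    using higher_deriv_bound_Re_pos_flat[OF hol_G pos_G G0 \<open>0 < n\<close>] by simp
qed

section \<open>Coefficient bounds for the class RH0\<close>

lemma higher_deriv_monomial_at_0:
  "(deriv ^^ i) (\<lambda>z::complex. z ^ k) 0 = (if i = k then fact k else 0)"
  using higher_deriv_power[of i 0 k 0]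
  by (cases "i < k") (auto simp: pochhammer_fact pochhammer_0_left)

lemma higher_deriv_monomial_mult_at_0:
  assumes "h holomorphic_on S" "open S" "0 \<in> S"
  shows "(deriv ^^ n) (\<lambda>z. z ^ k * h z) 0 = of_nat (n choose k) * fact k * (deriv ^^ (n - k)) h 0"
proof -
  have "(deriv ^^ n) (\<lambda>z. z ^ k * h z) 0
      = (\<Sum>i=0..n. of_nat (n choose i) * (deriv ^^ i) (\<lambda>z. z ^ k) 0 * (deriv ^^ (n - i)) h 0)"
    by (rule higher_deriv_mult[OF _ assms]) (auto intro: holomorphic_intros)
  also have "\<dots> = (\<Sum>i=0..n. if i = k then of_nat (n choose k) * fact k * (deriv ^^ (n - k)) h 0 else 0)"
    by (intro sum.cong) (auto simp: higher_deriv_monomial_at_0)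
  also have "\<dots> = of_nat (n choose k) * fact k * (deriv ^^ (n - k)) h 0"
    by (cases "k \<le> n") auto
  finally show ?thesis .
qed

lemma Lop_holomorphic: "g holomorphic_on ball 0 1 \<Longrightarrow> Lop \<gamma> \<delta> g holomorphic_on ball 0 1"
  unfolding Lop_def by (intro holomorphic_intros) auto

lemma higher_deriv_monomial_mult_higher_deriv_at_0:
  assumes "g holomorphic_on ball 0 1"
  shows "(deriv ^^ n) (\<lambda>z. z ^ j * (deriv ^^ Suc j) g z) 0
      = of_nat (n choose j) * fact j * (deriv ^^ Suc n) g 0"
proof -
  have "(deriv ^^ n) (\<lambda>z. z ^ j * (deriv ^^ Suc j) g z) 0
      = of_nat (n choose j) * fact j * (deriv ^^ (n - j)) ((deriv ^^ Suc j) g) 0"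
    by (rule higher_deriv_monomial_mult_at_0[of _ "ball 0 1"]) (auto intro: holomorphic_intros assms)
  also have "\<dots> = of_nat (n choose j) * fact j * (deriv ^^ Suc n) g 0"
  proof (cases "j \<le> n")
    case True
    then have "n - j + Suc j = Suc n" by simp
    then show ?thesis by (metis funpow_add o_apply)
  qed (simp add: not_le)
  finally show ?thesis .
qed

definition Lop_coeff :: "real \<Rightarrow> real \<Rightarrow> nat \<Rightarrow> real" where
  "Lop_coeff \<gamma> \<delta> n = \<gamma> + \<delta> * n + (\<delta> - \<gamma>) / 2 * n * (n - 1)"

lemma Lop_coeff_ge:
  assumes "0 \<le> \<gamma>" "\<gamma> \<le> \<delta>" "0 < n"
  shows "\<gamma> + \<delta> \<le> Lop_coeff \<gamma> \<delta> n"
proof -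
  have "\<delta> \<le> \<delta> * n" "0 \<le> (\<delta> - \<gamma>) / 2 * n * (n - 1)"
    using assms mult_left_mono[of 1 "real n" \<delta>] by auto
  then show ?thesis
    unfolding Lop_coeff_def by linarith
qed

lemma Lop_higher_deriv:
  assumes "g holomorphic_on ball 0 1"
  shows "(deriv ^^ n) (Lop \<gamma> \<delta> g) 0 = of_real (Lop_coeff \<gamma> \<delta> n) * (deriv ^^ Suc n) g 0"
proof -
  define c where "c = (\<delta> - \<gamma>) / 2"
  define T where "T j z = z ^ j * (deriv ^^ Suc j) g z" for j z
  have "T j analytic_on {0}" for j
    unfolding T_def
    by (rule holomorphic_on_imp_analytic_at[of _ "ball 0 1"]) (auto intro!: holomorphic_intros assms)
  moreover have "Lop \<gamma> \<delta> g = (\<lambda>z. of_real \<gamma> * T 0 z + (of_real \<delta> * T 1 z + of_real c * T 2 z))"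
    by (rule ext) (simp add: Lop_def T_def c_def numeral_3_eq_3 numeral_2_eq_2 mult.assoc)
  ultimately have "(deriv ^^ n) (Lop \<gamma> \<delta> g) 0 = of_real \<gamma> * (deriv ^^ n) (T 0) 0
      + (of_real \<delta> * (deriv ^^ n) (T 1) 0 + of_real c * (deriv ^^ n) (T 2) 0)"
    by (simp only: higher_deriv_add_at higher_deriv_cmult' analytic_intros)
  also have "\<dots> = of_real (\<gamma> + \<delta> * (n choose 1) + c * ((n choose 2) * 2)) * (deriv ^^ Suc n) g 0"
    unfolding T_def higher_deriv_monomial_mult_higher_deriv_at_0[OF assms] by (simp add: algebra_simps)
  also have "(n choose 2) * 2 = n * (n - 1)"
    by (induction n) (auto simp: numeral_2_eq_2 algebra_simps)
  finally show ?thesis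
    by (simp add: Lop_coeff_def c_def mult.assoc)
qed

lemma exists_unimodular_norm_add:
  fixes A B :: complex
  shows "\<exists>\<epsilon>. cmod \<epsilon> = 1 \<and> cmod (A + \<epsilon> * B) = cmod A + cmod B"
proof (cases "A = 0 \<or> B = 0")
  case True
  then show ?thesis by (intro exI[of _ 1]) auto
next
  case False
  then have "A + sgn A / sgn B * B = sgn A * of_real (cmod A + cmod B)"
    by (simp add: Complex.sgn_eq field_simps)
  then show ?thesis
    using False by (intro exI[of _ "sgn A / sgn B"]) (simp add: norm_mult norm_divide norm_sgn sgn_zero_iff flip: of_real_add)
qed

lemma RH0_Caratheodory:
  assumes R: "RH0 \<gamma> \<delta> lam s t" and "cmod \<epsilon> = 1" "0 < m"
  shows "cmod (of_real (Lop_coeff \<gamma> \<delta> m) * ((deriv ^^ Suc m) s 0 + \<epsilon> * (deriv ^^ Suc m) t 0))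
      \<le> 2 * (\<gamma> - lam) * fact m"
proof -
  have hol_s: "s holomorphic_on ball 0 1" and hol_t: "t holomorphic_on ball 0 1"
    and s1: "deriv s 0 = 1" and t1: "deriv t 0 = 0"
    and pos: "\<And>z. z \<in> ball 0 1 \<Longrightarrow> Re (Lop \<gamma> \<delta> s z - of_real lam) > cmod (Lop \<gamma> \<delta> t z)"
    using R unfolding RH0_def H0_def by auto
  define F where "F z = (Lop \<gamma> \<delta> s z - of_real lam) + \<epsilon> * Lop \<gamma> \<delta> t z" for z
  have hol_L: "Lop \<gamma> \<delta> s holomorphic_on ball 0 1" "Lop \<gamma> \<delta> t holomorphic_on ball 0 1"
    using Lop_holomorphic hol_s hol_t by auto
  have hol_F: "F holomorphic_on ball 0 1"
    unfolding F_def using hol_L by (intro holomorphic_intros) auto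
  have pos_F: "Re (F z) > 0" if "z \<in> ball 0 1" for z
  proof -
    have "- cmod (Lop \<gamma> \<delta> t z) \<le> Re (\<epsilon> * Lop \<gamma> \<delta> t z)"
      using abs_Re_le_cmod[of "\<epsilon> * Lop \<gamma> \<delta> t z"] \<open>cmod \<epsilon> = 1\<close> by (simp add: norm_mult)
    then show ?thesis using pos[OF that] unfolding F_def by simp
  qed
  have F0: "F 0 = of_real (\<gamma> - lam)"
    unfolding F_def Lop_def using s1 t1 by simp
  have "(deriv ^^ m) F 0 = (deriv ^^ m) (Lop \<gamma> \<delta> s) 0 + \<epsilon> * (deriv ^^ m) (Lop \<gamma> \<delta> t) 0"
    unfolding F_def using hol_L \<open>0 < m\<close>
    by (simp add: higher_deriv_add[of _ "ball 0 1"] higher_deriv_diff[of _ "ball 0 1"]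
        higher_deriv_cmult[of _ "ball 0 1"] holomorphic_intros)
  also have "\<dots> = of_real (Lop_coeff \<gamma> \<delta> m) * ((deriv ^^ Suc m) s 0 + \<epsilon> * (deriv ^^ Suc m) t 0)"
    unfolding Lop_higher_deriv[OF hol_s] Lop_higher_deriv[OF hol_t] by (simp add: algebra_simps)
  finally show ?thesis
    using Caratheodory_higher_deriv[OF hol_F pos_F F0 \<open>0 < m\<close>] by simp
qed

lemma RH0_coeff_bound:
  assumes "0 \<le> lam" "lam < \<gamma>" "\<gamma> \<le> \<delta>" and R: "RH0 \<gamma> \<delta> lam s t" and "2 \<le> n"
  shows "(cmod ((deriv ^^ n) s 0) + cmod ((deriv ^^ n) t 0)) / fact n \<le> (\<gamma> - lam) / (\<gamma> + \<delta>)"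
proof -
  define m where "m = n - 1"
  have m: "0 < m" "n = Suc m" using \<open>2 \<le> n\<close> unfolding m_def by auto
  define A B where "A = (deriv ^^ n) s 0" and "B = (deriv ^^ n) t 0"
  obtain \<epsilon> where \<epsilon>: "cmod \<epsilon> = 1" "cmod (A + \<epsilon> * B) = cmod A + cmod B"
    using exists_unimodular_norm_add by blast
  define e where "e = Lop_coeff \<gamma> \<delta> m"
  have "\<gamma> + \<delta> \<le> e" "\<gamma> + \<delta> > 0"
    using Lop_coeff_ge[of \<gamma> \<delta> m] assms m unfolding e_def by auto
  then have "e > 0" by linarith
  have bound: "e * (cmod A + cmod B) \<le> 2 * (\<gamma> - lam) * fact m"
    using RH0_Caratheodory[OF R \<epsilon>(1) \<open>0 < m\<close>] \<epsilon>(2) \<open>e > 0\<close>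
    unfolding A_def B_def e_def m(2) by (simp add: norm_mult)
  have "(cmod A + cmod B) / fact n = e * (cmod A + cmod B) / (e * n * fact m)"
    using \<open>e > 0\<close> m(2) by simp
  also have "\<dots> \<le> 2 * (\<gamma> - lam) * fact m / (e * n * fact m)"
    using bound \<open>e > 0\<close> m(2) by (intro divide_right_mono) auto
  also have "\<dots> = 2 * (\<gamma> - lam) / (e * n)"
    by simp
  also have "\<dots> \<le> 2 * (\<gamma> - lam) / ((\<gamma> + \<delta>) * 2)"
    using assms \<open>\<gamma> + \<delta> \<le> e\<close> \<open>\<gamma> + \<delta> > 0\<close> by (intro divide_left_mono mult_mono) auto
  also have "\<dots> = (\<gamma> - lam) / (\<gamma> + \<delta>)"
    using \<open>\<gamma> + \<delta> > 0\<close> by (simp add: field_simps)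
  finally show ?thesis
    unfolding A_def B_def .
qed

section \<open>Boundary terms on a circle\<close>

lemma sum_squares_powers_le:
  fixes x :: real
  assumes "0 \<le> x" "x < 1"
  shows "(\<Sum>n<N. (real n + 2)^2 * x ^ (n + 2)) \<le> x^2 * (x^2 - 3*x + 4) / (1 - x)^3"
proof -
  define q where "q N = (real N + 2)^2 + ((real N + 3)^2 - 3 * (real N + 2)^2) * x
    + ((real N + 4)^2 - 3 * (real N + 3)^2 + 3 * (real N + 2)^2) * x^2" for N
  have partial: "(1 - x)^3 * (\<Sum>n<N. (real n + 2)^2 * x ^ (n + 2))
      = x^2 * (x^2 - 3*x + 4) - x ^ (N + 2) * q N" for N
  proof (induction N)
    case 0
    then show ?case by (simp add: q_def power2_eq_square algebra_simps)
  next
    case (Suc N)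
    have "q N - (1 - x)^3 * (real N + 2)^2 = x * q (Suc N)"
      by (simp add: q_def power2_eq_square power3_eq_cube algebra_simps)
    then show ?case
      using Suc by (simp add: algebra_simps)
  qed
  have "q N = (real N + 2)^2 * (1 - x)^2 + x * ((2 * real N + 5) - (2 * real N + 3) * x)"
    by (simp add: q_def power2_eq_square algebra_simps)
  moreover have "(2 * real N + 3) * x \<le> 2 * real N + 5"
    using assms mult_left_le[of x "2 * real N + 3"] by linarith
  ultimately have "q N \<ge> 0"
    using assms by simp
  then have "(1 - x)^3 * (\<Sum>n<N. (real n + 2)^2 * x ^ (n + 2)) \<le> x^2 * (x^2 - 3*x + 4)"
    unfolding partial using assms by simp
  then show ?thesis
    using assms by (simp add: field_simps)
qed

lemma norm_sums_add4_le:
  fixes f1 f2 f3 f4 :: "nat \<Rightarrow> 'a::real_normed_vector"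
  assumes "f1 sums S1" "f2 sums S2" "f3 sums S3" "f4 sums S4"
    and "\<And>N. (\<Sum>n<N. norm (f1 n) + norm (f2 n) + norm (f3 n) + norm (f4 n)) \<le> M"
  shows "norm S1 + norm S2 + norm S3 + norm S4 \<le> M"
proof (rule tendsto_upperbound)
  show "(\<lambda>N. norm (\<Sum>n<N. f1 n) + norm (\<Sum>n<N. f2 n) + norm (\<Sum>n<N. f3 n) + norm (\<Sum>n<N. f4 n))
      \<longlonglongrightarrow> norm S1 + norm S2 + norm S3 + norm S4"
    using assms(1-4) unfolding sums_def by (intro tendsto_intros)
  have "norm (\<Sum>n<N. f1 n) + norm (\<Sum>n<N. f2 n) + norm (\<Sum>n<N. f3 n) + norm (\<Sum>n<N. f4 n)
      \<le> (\<Sum>n<N. norm (f1 n) + norm (f2 n) + norm (f3 n) + norm (f4 n))" for N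
    unfolding sum.distrib by (intro add_mono norm_sum)
  then show "\<forall>\<^sub>F N in sequentially.
      norm (\<Sum>n<N. f1 n) + norm (\<Sum>n<N. f2 n) + norm (\<Sum>n<N. f3 n) + norm (\<Sum>n<N. f4 n) \<le> M"
    using assms(5) order_trans by (intro always_eventually allI) blast
qed simp

lemma z_deriv_sums:
  assumes "g holomorphic_on ball 0 1" "z \<in> ball 0 1"
  shows "(\<lambda>n. of_nat n * ((deriv ^^ n) g 0 / fact n) * z ^ n) sums (z * deriv g z)"
proof -
  define f where "f n = of_nat n * ((deriv ^^ n) g 0 / fact n) * z ^ n" for n
  have "(\<lambda>n. (deriv ^^ n) (deriv g) 0 / fact n * z ^ n) sums deriv g z"
    using holomorphic_power_series[of "deriv g" 0 1 z] assms by (simp add: holomorphic_deriv)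
  then have "(\<lambda>n. z * ((deriv ^^ n) (deriv g) 0 / fact n * z ^ n)) sums (z * deriv g z)"
    by (rule sums_mult)
  moreover have "z * ((deriv ^^ n) (deriv g) 0 / fact n * z ^ n) = f (Suc n)" for n
    unfolding f_def funpow_Suc_right o_apply by (simp add: field_simps del: funpow.simps of_nat_Suc)
  ultimately have "f sums (z * deriv g z + f 0)"
    by (simp only: sums_Suc_iff[symmetric])
  then show ?thesis
    by (simp add: f_def[abs_def])
qed

lemma z2_deriv2_sums:
  assumes "g holomorphic_on ball 0 1" "z \<in> ball 0 1"
  shows "(\<lambda>n. of_nat n * of_nat (n - 1) * ((deriv ^^ n) g 0 / fact n) * z ^ n)
      sums (z^2 * deriv (deriv g) z)"
proof -
  define f where "f n = of_nat n * of_nat (n - 1) * ((deriv ^^ n) g 0 / fact n) * z ^ n" for n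
  have "(\<lambda>n. z * (of_nat n * ((deriv ^^ n) (deriv g) 0 / fact n) * z ^ n)) sums (z * (z * deriv (deriv g) z))"
    using assms by (intro sums_mult z_deriv_sums holomorphic_deriv) auto
  moreover have "z * (of_nat n * ((deriv ^^ n) (deriv g) 0 / fact n) * z ^ n) = f (Suc n)" for n
    unfolding f_def funpow_Suc_right o_apply by (simp add: field_simps del: funpow.simps of_nat_Suc)
  ultimately have "f sums (z * (z * deriv (deriv g) z) + f 0)"
    by (simp only: sums_Suc_iff[symmetric])
  then show ?thesis
    by (simp add: f_def[abs_def] power2_eq_square mult.assoc)
qed

lemma z_deriv_tail_sums:
  assumes "g holomorphic_on ball 0 1" "z \<in> ball 0 1"
  shows "(\<lambda>n. of_nat (n + 2) * ((deriv ^^ (n + 2)) g 0 / fact (n + 2)) * z ^ (n + 2))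
      sums (z * deriv g z - deriv g 0 * z)"
proof -
  let ?f = "\<lambda>n. of_nat n * ((deriv ^^ n) g 0 / fact n) * z ^ n"
  have "(\<lambda>n. ?f (n + 2)) sums (z * deriv g z - (\<Sum>i<2. ?f i))"
    by (rule iffD2[OF sums_iff_shift' z_deriv_sums[OF assms]])
  moreover have "(\<Sum>i<2. ?f i) = deriv g 0 * z"
    by (simp add: numeral_2_eq_2)
  ultimately show ?thesis by simp
qed

lemma z2_deriv2_tail_sums:
  assumes "g holomorphic_on ball 0 1" "z \<in> ball 0 1"
  shows "(\<lambda>n. of_nat (n + 2) * of_nat (n + 1) * ((deriv ^^ (n + 2)) g 0 / fact (n + 2)) * z ^ (n + 2))
      sums (z^2 * deriv (deriv g) z)"
proof -
  let ?f = "\<lambda>n. of_nat n * of_nat (n - 1) * ((deriv ^^ n) g 0 / fact n) * z ^ n"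
  have "(\<lambda>n. ?f (n + 2)) sums (z^2 * deriv (deriv g) z - (\<Sum>i<2. ?f i))"
    by (rule iffD2[OF sums_iff_shift' z2_deriv2_sums[OF assms]])
  moreover have "(\<Sum>i<2. ?f i) = 0"
    by (simp add: numeral_2_eq_2)
  ultimately show ?thesis by simp
qed

lemma boundary_terms_bound:
  assumes hol_s: "s holomorphic_on ball 0 1" and hol_t: "t holomorphic_on ball 0 1"
    and s1: "deriv s 0 = 1" and t1: "deriv t 0 = 0"
    and coeff: "\<And>n. 2 \<le> n \<Longrightarrow> (cmod ((deriv ^^ n) s 0) + cmod ((deriv ^^ n) t 0)) / fact n \<le> K"
    and z: "z \<in> ball 0 1"
  shows "cmod (z * deriv s z - z) + cmod (z^2 * deriv (deriv s) z)
      + cmod (z * deriv t z) + cmod (z^2 * deriv (deriv t) z)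
      \<le> K * ((cmod z)^2 * ((cmod z)^2 - 3 * cmod z + 4) / (1 - cmod z)^3)"
proof -
  define x where "x = cmod z"
  have x: "0 \<le> x" "x < 1" using z unfolding x_def by auto
  have "0 \<le> K"
    using order_trans[OF _ coeff[of 2]] by simp
  define c where "c g n = (deriv ^^ (n + 2)) g 0 / fact (n + 2)" for g :: "complex \<Rightarrow> complex" and n
  define f1 f2 f3 f4 where "f1 n = of_nat (n + 2) * c s n * z ^ (n + 2)"
    and "f2 n = of_nat (n + 2) * of_nat (n + 1) * c s n * z ^ (n + 2)"
    and "f3 n = of_nat (n + 2) * c t n * z ^ (n + 2)"
    and "f4 n = of_nat (n + 2) * of_nat (n + 1) * c t n * z ^ (n + 2)" for n
  have sums: "f1 sums (z * deriv s z - z)" "f2 sums (z^2 * deriv (deriv s) z)"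
    "f3 sums (z * deriv t z)" "f4 sums (z^2 * deriv (deriv t) z)"
    using z_deriv_tail_sums[OF hol_s z] z2_deriv2_tail_sums[OF hol_s z]
      z_deriv_tail_sums[OF hol_t z] z2_deriv2_tail_sums[OF hol_t z] s1 t1
    unfolding f1_def[abs_def] f2_def[abs_def] f3_def[abs_def] f4_def[abs_def] c_def by simp_all
  have term_norms: "cmod (f1 n) + cmod (f2 n) + cmod (f3 n) + cmod (f4 n)
      = (real n + 2)^2 * (cmod (c s n) + cmod (c t n)) * x ^ (n + 2)" for n
  proof -
    have "cmod (f1 n) = (real n + 2) * cmod (c s n) * x ^ (n + 2)"
      "cmod (f2 n) = (real n + 2) * (real n + 1) * cmod (c s n) * x ^ (n + 2)"
      "cmod (f3 n) = (real n + 2) * cmod (c t n) * x ^ (n + 2)"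
      "cmod (f4 n) = (real n + 2) * (real n + 1) * cmod (c t n) * x ^ (n + 2)"
      unfolding f1_def f2_def f3_def f4_def x_def norm_mult norm_power norm_of_nat
      by (simp_all add: add.commute)
    then show ?thesis
      by (simp add: power2_eq_square algebra_simps)
  qed
  have "(\<Sum>n<N. cmod (f1 n) + cmod (f2 n) + cmod (f3 n) + cmod (f4 n))
      \<le> K * (x^2 * (x^2 - 3 * x + 4) / (1 - x)^3)" for N
  proof -
    have "(\<Sum>n<N. cmod (f1 n) + cmod (f2 n) + cmod (f3 n) + cmod (f4 n))
        \<le> (\<Sum>n<N. K * ((real n + 2)^2 * x ^ (n + 2)))"
    proof (rule sum_mono)
      fix n
      have "cmod (c s n) + cmod (c t n) \<le> K"
        using coeff[of "n + 2"] unfolding c_def norm_divide norm_fact by (simp add: add_divide_distrib)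
      from mult_right_mono[OF mult_left_mono[OF this], of "(real n + 2)^2" "x ^ (n + 2)"]
      show "cmod (f1 n) + cmod (f2 n) + cmod (f3 n) + cmod (f4 n) \<le> K * ((real n + 2)^2 * x ^ (n + 2))"
        using x unfolding term_norms by (simp add: mult_ac)
    qed
    also have "\<dots> \<le> K * (x^2 * (x^2 - 3 * x + 4) / (1 - x)^3)"
      unfolding sum_distrib_left[symmetric] using sum_squares_powers_le[OF x] \<open>0 \<le> K\<close>
      by (intro mult_left_mono) auto
    finally show ?thesis .
  qed
  then show ?thesis
    unfolding x_def by (rule norm_sums_add4_le[OF sums])
qed

lemma RH0_boundary_terms_less:
  assumes "0 \<le> lam" "lam < \<gamma>" "\<gamma> \<le> \<delta>" and R: "RH0 \<gamma> \<delta> lam s t"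
    and "0 < \<rho>" "\<rho> < 1" "0 < pc \<gamma> \<delta> lam \<rho>" and "cmod z = \<rho>"
  shows "cmod (z * deriv s z - z) + cmod (z^2 * deriv (deriv s) z)
      + cmod (z * deriv t z) + cmod (z^2 * deriv (deriv t) z) < \<rho>"
proof -
  have "s holomorphic_on ball 0 1" "t holomorphic_on ball 0 1" "deriv s 0 = 1" "deriv t 0 = 0"
    using R unfolding RH0_def H0_def by auto
  then have "cmod (z * deriv s z - z) + cmod (z^2 * deriv (deriv s) z)
      + cmod (z * deriv t z) + cmod (z^2 * deriv (deriv t) z)
      \<le> (\<gamma> - lam) / (\<gamma> + \<delta>) * (\<rho>^2 * (\<rho>^2 - 3 * \<rho> + 4) / (1 - \<rho>)^3)"
    using boundary_terms_bound[of s t "(\<gamma> - lam) / (\<gamma> + \<delta>)" z] RH0_coeff_bound[OF assms(1-4)] assms(6,8)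
    by simp
  also have "\<dots> < \<rho>"
  proof -
    define c where "c = \<rho> * (\<rho>^2 - 3 * \<rho> + 4)"
    have "(\<gamma> - lam) * c < (\<gamma> + \<delta>) * (1 - \<rho>)^3"
      using \<open>0 < pc \<gamma> \<delta> lam \<rho>\<close> unfolding pc_eq c_def by (simp add: add.commute)
    moreover have "(\<gamma> + \<delta>) * (1 - \<rho>)^3 > 0"
      using assms by simp
    ultimately have "(\<gamma> - lam) / (\<gamma> + \<delta>) * (c / (1 - \<rho>)^3) < 1"
      by (simp add: divide_less_eq)
    then have "\<rho> * ((\<gamma> - lam) / (\<gamma> + \<delta>) * (c / (1 - \<rho>)^3)) < \<rho> * 1"
      using \<open>0 < \<rho>\<close> by (rule mult_strict_left_mono)
    then show ?thesis
      unfolding c_def by (simp add: power2_eq_square mult_ac)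
  qed
  finally show ?thesis .
qed

section \<open>Closed curves with strictly supporting normals\<close>

lemma inner_complex_eq_Re_cnj_mult: "a \<bullet> w = Re (cnj a * w)"
  by (simp add: inner_complex_def)

lemma convex_hull_exposed_point:
  fixes S :: "'a::euclidean_space set"
  assumes "compact S" "w \<in> convex hull S" "n \<bullet> w = n \<bullet> p"
    and below: "\<And>y. y \<in> S \<Longrightarrow> n \<bullet> y \<le> n \<bullet> p"
    and exposed: "\<And>y. y \<in> S \<Longrightarrow> n \<bullet> y = n \<bullet> p \<Longrightarrow> y = p"
  shows "w = p"
proof -
  define T where "T = convex hull S \<inter> {x. n \<bullet> x = n \<bullet> p}"
  have "convex hull S \<subseteq> {x. n \<bullet> x \<le> n \<bullet> p}"
    using below by (intro hull_minimal) (auto simp: convex_halfspace_le)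
  then have "T face_of convex hull S"
    unfolding T_def by (intro face_of_Int_supporting_hyperplane_le) auto
  then obtain S' where "S' \<subseteq> S" "T = convex hull S'"
    using face_of_convex_hull_subset[OF \<open>compact S\<close>] by blast
  moreover have "S' \<subseteq> T"
    using \<open>T = convex hull S'\<close> hull_subset[of S' convex] by simp
  ultimately have "S' \<subseteq> {p}"
    using exposed unfolding T_def by auto
  then have "T \<subseteq> {p}"
    using \<open>T = convex hull S'\<close> hull_mono[of S' "{p}" convex] by simp
  moreover have "w \<in> T"
    unfolding T_def using assms(2,3) by simp
  ultimately show ?thesis by auto
qed

locale strictly_supported_curve =
  fixes F n :: "real \<Rightarrow> complex"
  assumes periodic: "\<And>\<phi>. F (\<phi> + 2 * pi) = F \<phi>"
    and F_deriv: "\<And>\<phi>. (F has_vector_derivative (\<i> * n \<phi>)) (at \<phi>)"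
    and supporting: "\<And>\<theta> u. 0 < u \<Longrightarrow> u < 2 * pi \<Longrightarrow> n \<theta> \<bullet> (F (\<theta> + u) - F \<theta>) < 0"
begin

lemma shift_within_period:
  obtains u where "0 \<le> u" "u < 2 * pi" "F \<phi> = F (\<theta> + u)"
proof -
  interpret periodic_fun_simple F "2 * pi"
    by unfold_locales (rule periodic)
  define k where "k = \<lfloor>(\<phi> - \<theta>) / (2 * pi)\<rfloor>"
  define u where "u = \<phi> - \<theta> - of_int k * (2 * pi)"
  have "of_int k \<le> (\<phi> - \<theta>) / (2 * pi)" "(\<phi> - \<theta>) / (2 * pi) < of_int k + 1"
    unfolding k_def by linarith+
  then have "0 \<le> u" "u < 2 * pi"
    unfolding u_def by (simp_all add: field_simps)
  moreover have "F \<phi> = F (\<theta> + u)"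
    using plus_of_int[of "\<theta> + u" k] unfolding u_def by simp
  ultimately show ?thesis using that by blast
qed

lemma range_eq_image_period: "range F = F ` {0..<2 * pi}"
proof
  show "range F \<subseteq> F ` {0..<2 * pi}"
  proof
    fix y assume "y \<in> range F"
    then obtain \<phi> where "y = F \<phi>" by blast
    moreover obtain u where "0 \<le> u" "u < 2 * pi" "F \<phi> = F (0 + u)"
      by (rule shift_within_period)
    ultimately show "y \<in> F ` {0..<2 * pi}" by auto
  qed
qed auto

lemma range_eq_image_closed_period: "range F = F ` {0..2 * pi}"
  using range_eq_image_period by auto

lemma supporting_le: "n \<theta> \<bullet> F \<phi> \<le> n \<theta> \<bullet> F \<theta>"
proof -
  obtain u where "0 \<le> u" "u < 2 * pi" "F \<phi> = F (\<theta> + u)"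
    by (rule shift_within_period)
  then show ?thesis
    using supporting[of u \<theta>] by (cases "u = 0") (auto simp: inner_diff_right)
qed

lemma supporting_eq: "n \<theta> \<bullet> F \<phi> = n \<theta> \<bullet> F \<theta> \<Longrightarrow> F \<phi> = F \<theta>"
proof -
  assume eq: "n \<theta> \<bullet> F \<phi> = n \<theta> \<bullet> F \<theta>"
  obtain u where "0 \<le> u" "u < 2 * pi" "F \<phi> = F (\<theta> + u)"
    by (rule shift_within_period)
  then show ?thesis
    using supporting[of u \<theta>] eq by (cases "u = 0") (auto simp: inner_diff_right)
qed

lemma inj_on_period: "inj_on F {0..<2 * pi}"
proof (rule linorder_inj_onI)
  fix a b assume "a < b" "a \<in> {0..<2 * pi}" "b \<in> {0..<2 * pi}"
  then have "n a \<bullet> (F (a + (b - a)) - F a) < 0"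
    by (intro supporting) auto
  then show "F a \<noteq> F b" by auto
qed auto

lemma continuous_curve: "continuous_on A F"
  using F_deriv by (meson continuous_at_imp_continuous_on has_vector_derivative_continuous)

lemma compact_range: "compact (range F)"
  unfolding range_eq_image_closed_period
  by (intro compact_continuous_image continuous_curve compact_Icc)

text \<open>At a point where a linear functional attains its minimum on the curve, the functional
  vanishes on the tangent, so it is a real multiple of the normal; testing it at the opposite
  point of the curve fixes the sign.\<close>

lemma minimizing_functional_normal:
  assumes "a \<noteq> 0" and min: "\<And>\<phi>. a \<bullet> F \<theta> \<le> a \<bullet> F \<phi>"
  obtains c where "c > 0" "a = - c *\<^sub>R n \<theta>"
proof -
  have "((\<lambda>\<phi>. cnj a * F \<phi>) has_vector_derivative (cnj a * (\<i> * n \<theta>))) (at \<theta>)"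
    by (rule has_vector_derivative_mult_right[OF F_deriv])
  from has_field_derivative_Re[OF this]
  have "((\<lambda>\<phi>. a \<bullet> F \<phi>) has_real_derivative Re (cnj a * (\<i> * n \<theta>))) (at \<theta>)"
    unfolding inner_complex_eq_Re_cnj_mult .
  then have "Re (cnj a * (\<i> * n \<theta>)) = 0"
    by (rule DERIV_local_min[of _ _ _ 1]) (use min in auto)
  moreover have "n \<theta> \<noteq> 0"
    using supporting[of pi \<theta>] by auto
  ultimately have "Im (a / n \<theta>) = 0"
    by (simp add: Im_divide algebra_simps)
  then have a: "a = of_real (Re (a / n \<theta>)) * n \<theta>"
    using \<open>n \<theta> \<noteq> 0\<close> by (metis complex_is_Real_iff nonzero_eq_divide_eq of_real_Re)
  have "0 \<le> a \<bullet> (F (\<theta> + pi) - F \<theta>)"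
    using min[of "\<theta> + pi"] by (simp add: inner_diff_right)
  also have "\<dots> = Re (a / n \<theta>) * (n \<theta> \<bullet> (F (\<theta> + pi) - F \<theta>))"
    by (subst a) (simp add: inner_complex_def algebra_simps)
  finally have "Re (a / n \<theta>) < 0"
    using supporting[of pi \<theta>] \<open>a \<noteq> 0\<close> a by (cases "Re (a / n \<theta>) = 0") (auto simp: zero_le_mult_iff)
  with a show ?thesis
    by (intro that[of "- Re (a / n \<theta>)"]) (simp_all add: scaleR_conv_of_real)
qed

lemma hull_range_supporting_le:
  assumes "w \<in> convex hull range F"
  shows "n \<theta> \<bullet> w \<le> n \<theta> \<bullet> F \<theta>"
proof -
  have "convex hull range F \<subseteq> {w. n \<theta> \<bullet> w \<le> n \<theta> \<bullet> F \<theta>}"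
    using supporting_le by (intro hull_minimal) (auto simp: convex_halfspace_le)
  then show ?thesis using assms by blast
qed

lemma interior_hull_range_nonempty: "interior (convex hull range F) \<noteq> {}"
proof
  assume "interior (convex hull range F) = {}"
  then obtain a b where "a \<noteq> 0" "convex hull range F \<subseteq> {x. a \<bullet> x = b}"
    using empty_interior_subset_hyperplane[of "convex hull range F"] by auto
  then have "a \<bullet> F \<phi> = b" for \<phi>
    using hull_subset[of "range F" convex] by auto
  then obtain c where "c > 0" "a = - c *\<^sub>R n 0"
    using minimizing_functional_normal[OF \<open>a \<noteq> 0\<close>, of 0] by auto
  moreover have "a \<bullet> F pi = a \<bullet> F 0"
    using \<open>a \<bullet> F pi = b\<close> \<open>a \<bullet> F 0 = b\<close> by simp
  ultimately have "n 0 \<bullet> F pi = n 0 \<bullet> F 0"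
    by simp
  then show False
    using supporting[of pi 0] by (simp add: inner_diff_right)
qed

lemma frontier_hull_range_subset: "frontier (convex hull range F) \<subseteq> range F"
proof
  define K where "K = convex hull range F"
  have "closed K"
    unfolding K_def by (intro compact_imp_closed compact_convex_hull compact_range)
  have "rel_interior K = interior K"
    unfolding K_def by (rule rel_interior_nonempty_interior[OF interior_hull_range_nonempty])
  fix w assume "w \<in> frontier (convex hull range F)"
  then have "w \<in> closure K" "w \<notin> rel_interior K"
    unfolding frontier_def K_def \<open>rel_interior K = interior K\<close>[unfolded K_def] by simp_all
  then have "w \<in> K"
    using \<open>closed K\<close> by simp
  obtain a where "a \<noteq> 0" and a: "\<And>y. y \<in> closure K \<Longrightarrow> a \<bullet> w \<le> a \<bullet> y"
    using supporting_hyperplane_relative_frontier[OF _ \<open>w \<in> closure K\<close> \<open>w \<notin> rel_interior K\<close>]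
    unfolding K_def by (metis convex_convex_hull)
  have "continuous_on {0..2 * pi} (\<lambda>\<phi>. a \<bullet> F \<phi>)"
    using continuous_curve by (intro continuous_intros)
  then obtain \<theta> where \<theta>_min: "\<forall>\<phi>\<in>{0..2 * pi}. a \<bullet> F \<theta> \<le> a \<bullet> F \<phi>"
    using continuous_attains_inf[OF compact_Icc, of 0 "2 * pi"] by auto
  have \<theta>: "a \<bullet> F \<theta> \<le> a \<bullet> F \<phi>" for \<phi>
  proof -
    have "F \<phi> \<in> F ` {0..2 * pi}"
      using range_eq_image_closed_period by blast
    then show ?thesis
      using \<theta>_min by auto
  qed
  obtain c where "c > 0" "a = - c *\<^sub>R n \<theta>"
    by (rule minimizing_functional_normal[OF \<open>a \<noteq> 0\<close> \<theta>])
  moreover have "a \<bullet> w \<le> a \<bullet> F \<theta>"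
    using a[of "F \<theta>"] \<open>closed K\<close> hull_subset[of "range F" convex] unfolding K_def by auto
  ultimately have "c * (n \<theta> \<bullet> F \<theta>) \<le> c * (n \<theta> \<bullet> w)"
    by simp
  then have "n \<theta> \<bullet> F \<theta> \<le> n \<theta> \<bullet> w"
    using \<open>c > 0\<close> by simp
  then have on_line: "n \<theta> \<bullet> w = n \<theta> \<bullet> F \<theta>"
    using hull_range_supporting_le[of w \<theta>] \<open>w \<in> K\<close> unfolding K_def by linarith
  have "w = F \<theta>"
  proof (rule convex_hull_exposed_point[OF compact_range _ on_line])
    show "w \<in> convex hull range F"
      using \<open>w \<in> K\<close> unfolding K_def .
    show "n \<theta> \<bullet> y \<le> n \<theta> \<bullet> F \<theta>" if "y \<in> range F" for y
      using that supporting_le by blast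
    show "y = F \<theta>" if "y \<in> range F" "n \<theta> \<bullet> y = n \<theta> \<bullet> F \<theta>" for y
      using that supporting_eq by blast
  qed
  then show "w \<in> range F" by simp
qed

lemma range_subset_frontier_hull: "range F \<subseteq> frontier (convex hull range F)"
proof
  fix y assume "y \<in> range F"
  then obtain \<theta> where y: "y = F \<theta>" by blast
  have "n \<theta> \<noteq> 0"
    using supporting[of pi \<theta>] by auto
  have "y \<notin> interior (convex hull range F)"
  proof
    assume "y \<in> interior (convex hull range F)"
    then obtain e where "e > 0" and e: "ball y e \<subseteq> convex hull range F"
      unfolding mem_interior by blast
    define w where "w = y + (e / 2 / norm (n \<theta>)) *\<^sub>R n \<theta>"
    have "dist y w < e"
      using \<open>e > 0\<close> \<open>n \<theta> \<noteq> 0\<close> by (simp add: w_def dist_norm)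
    then have "n \<theta> \<bullet> w \<le> n \<theta> \<bullet> F \<theta>"
      using e hull_range_supporting_le by auto
    moreover have "n \<theta> \<bullet> w = n \<theta> \<bullet> F \<theta> + e / 2 * norm (n \<theta>)"
      using \<open>n \<theta> \<noteq> 0\<close>
      by (simp add: w_def y inner_add_right power2_norm_eq_inner[symmetric] power2_eq_square)
    ultimately show False
      using \<open>e > 0\<close> \<open>n \<theta> \<noteq> 0\<close> by (simp add: mult_le_0_iff)
  qed
  moreover have "y \<in> closure (convex hull range F)"
    using \<open>y \<in> range F\<close> hull_subset[of "range F" convex] closure_subset by blast
  ultimately show "y \<in> frontier (convex hull range F)"
    unfolding frontier_def by blast
qed

lemma convex_curve_range: "convex_curve (range F)"
  unfolding convex_curve_def
proof (intro exI conjI)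
  show "convex (convex hull range F)" "bounded (convex hull range F)"
    "interior (convex hull range F) \<noteq> {}"
    using compact_imp_bounded[OF compact_convex_hull[OF compact_range]]
      interior_hull_range_nonempty by simp_all
  show "range F = frontier (convex hull range F)"
    using frontier_hull_range_subset range_subset_frontier_hull by (rule antisym[rotated])
qed

end

text \<open>If the normal turns monotonically through exactly one full turn per period, the
  support function of the curve at a point decreases while the normal has turned by less
  than pi and increases afterwards; as it vanishes at both ends of the period, it is negative
  in between.\<close>

lemma supporting_if_normal_angle_increasing:
  fixes F n :: "real \<Rightarrow> complex" and r \<Phi> :: "real \<Rightarrow> real"
  assumes periodic: "\<And>\<phi>. F (\<phi> + 2 * pi) = F \<phi>"
    and F_deriv: "\<And>\<phi>. (F has_vector_derivative (\<i> * n \<phi>)) (at \<phi>)"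
    and polar: "\<And>\<phi>. n \<phi> = of_real (r \<phi>) * cis (\<Phi> \<phi>)" and r_pos: "\<And>\<phi>. r \<phi> > 0"
    and increasing: "\<And>a b. a < b \<Longrightarrow> \<Phi> a < \<Phi> b"
    and full_turn: "\<And>\<phi>. \<Phi> (\<phi> + 2 * pi) = \<Phi> \<phi> + 2 * pi"
    and u: "0 < u" "u < 2 * pi"
  shows "n \<theta> \<bullet> (F (\<theta> + u) - F \<theta>) < 0"
proof -
  define H where "H v = n \<theta> \<bullet> (F (\<theta> + v) - F \<theta>)" for v
  define \<Delta> where "\<Delta> v = \<Phi> (\<theta> + v) - \<Phi> \<theta>" for v
  have H_deriv: "(H has_real_derivative - (r \<theta> * r (\<theta> + v) * sin (\<Delta> v))) (at v)" for v
  proof -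
    have "((\<lambda>v. \<theta> + v) has_vector_derivative 1) (at v)"
      by (auto intro!: derivative_eq_intros simp: has_real_derivative_iff_has_vector_derivative[symmetric])
    from vector_diff_chain_at[OF this F_deriv]
    have "((\<lambda>v. F (\<theta> + v)) has_vector_derivative (\<i> * n (\<theta> + v))) (at v)"
      by (simp add: o_def)
    then have "((\<lambda>v. cnj (n \<theta>) * (F (\<theta> + v) - F \<theta>)) has_vector_derivative
        (cnj (n \<theta>) * (\<i> * n (\<theta> + v) - 0))) (at v)"
      by (intro has_vector_derivative_mult_right has_vector_derivative_diff has_vector_derivative_const)
    from has_field_derivative_Re[OF this]
    show ?thesis
      unfolding H_def inner_complex_eq_Re_cnj_mult
      by (simp add: polar \<Delta>_def sin_diff algebra_simps)
  qed
  have cont: "continuous_on {a..b} H" for a b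
    using H_deriv by (intro DERIV_atLeastAtMost_imp_continuous_on) blast
  have \<Delta>_increasing: "a < b \<Longrightarrow> \<Delta> a < \<Delta> b" for a b
    unfolding \<Delta>_def using increasing[of "\<theta> + a" "\<theta> + b"] by simp
  have "\<Delta> 0 = 0" "\<Delta> (2 * pi) = 2 * pi"
    unfolding \<Delta>_def using full_turn[of \<theta>] by (simp_all add: add.commute)
  have "H 0 = 0" "H (2 * pi) = 0"
    unfolding H_def using periodic[of \<theta>] by (simp_all add: add.commute)
  show ?thesis
  proof (cases "\<Delta> u \<le> pi")
    case True
    have "H u < H 0"
    proof (rule DERIV_neg_imp_decreasing_open[OF u(1) _ cont])
      fix v assume "0 < v" "v < u"
      then have "0 < \<Delta> v" "\<Delta> v < pi"
        using \<Delta>_increasing[of 0 v] \<Delta>_increasing[of v u] \<open>\<Delta> 0 = 0\<close> True by auto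
      then have "sin (\<Delta> v) > 0"
        by (rule sin_gt_zero)
      then show "\<exists>y. DERIV H v :> y \<and> y < 0"
        using H_deriv r_pos by (intro exI conjI) auto
    qed
    then show ?thesis using \<open>H 0 = 0\<close> unfolding H_def by simp
  next
    case False
    have "H u < H (2 * pi)"
    proof (rule DERIV_pos_imp_increasing_open[OF u(2) _ cont])
      fix v assume "u < v" "v < 2 * pi"
      then have "pi < \<Delta> v" "\<Delta> v < 2 * pi"
        using \<Delta>_increasing[of u v] \<Delta>_increasing[of v "2 * pi"] \<open>\<Delta> (2 * pi) = 2 * pi\<close> False by auto
      then have "sin (\<Delta> v) < 0"
        by (rule sin_lt_zero)
      then show "\<exists>y. DERIV H v :> y \<and> y > 0"
        using H_deriv r_pos by (intro exI conjI) (auto simp: mult_pos_neg)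
    qed
    then show ?thesis using \<open>H (2 * pi) = 0\<close> unfolding H_def by simp
  qed
qed

section \<open>Images of circles\<close>

locale small_distortion_circle =
  fixes s t :: "complex \<Rightarrow> complex" and \<rho> :: real
  assumes hol_s: "s holomorphic_on ball 0 1" and hol_t: "t holomorphic_on ball 0 1"
    and \<rho>: "0 < \<rho>" "\<rho> < 1"
    and small: "\<And>z. cmod z = \<rho> \<Longrightarrow> cmod (z * deriv s z - z) + cmod (z^2 * deriv (deriv s) z)
        + cmod (z * deriv t z) + cmod (z^2 * deriv (deriv t) z) < \<rho>"
begin

definition circ :: "real \<Rightarrow> complex" where
  "circ \<phi> = of_real \<rho> * exp (\<i> * of_real \<phi>)"

definition curve :: "real \<Rightarrow> complex" where
  "curve \<phi> = harm s t (circ \<phi>)"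

definition normal :: "real \<Rightarrow> complex" where
  "normal \<phi> = circ \<phi> * deriv s (circ \<phi>) - cnj (circ \<phi> * deriv t (circ \<phi>))"

definition normal_rate :: "real \<Rightarrow> complex" where
  "normal_rate \<phi> = circ \<phi> * deriv s (circ \<phi>) + (circ \<phi>)^2 * deriv (deriv s) (circ \<phi>)
    + cnj (circ \<phi> * deriv t (circ \<phi>) + (circ \<phi>)^2 * deriv (deriv t) (circ \<phi>))"

lemma norm_circ: "cmod (circ \<phi>) = \<rho>"
  unfolding circ_def using \<rho> by (simp add: norm_mult)

lemma circ_in_ball: "circ \<phi> \<in> ball 0 1"
  using norm_circ \<rho> by simp

lemma circ_periodic: "circ (\<phi> + 2 * pi) = circ \<phi>"
proof -
  have "exp (\<i> * (2 * complex_of_real pi)) = 1"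
    using exp_two_pi_i by (simp add: ac_simps)
  then show ?thesis
    unfolding circ_def by (simp add: distrib_left exp_add)
qed

lemma sphere_eq_image_circ: "sphere 0 \<rho> = circ ` {0..<2 * pi}"
proof
  show "circ ` {0..<2 * pi} \<subseteq> sphere 0 \<rho>"
    using norm_circ by auto
  show "sphere 0 \<rho> \<subseteq> circ ` {0..<2 * pi}"
  proof
    fix z :: complex assume "z \<in> sphere 0 \<rho>"
    then have "z = circ (Arg2pi z)"
      using Arg2pi[of z] unfolding is_Arg_def circ_def by simp
    moreover have "Arg2pi z \<in> {0..<2 * pi}"
      using Arg2pi[of z] by auto
    ultimately show "z \<in> circ ` {0..<2 * pi}" by blast
  qed
qed

lemma has_vector_derivative_comp_circ:
  assumes "g holomorphic_on ball 0 1"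
  shows "((\<lambda>\<phi>. g (circ \<phi>)) has_vector_derivative (\<i> * circ \<phi> * deriv g (circ \<phi>))) (at \<phi>)"
proof -
  have "((\<lambda>w. of_real \<rho> * exp (\<i> * w)) has_field_derivative (\<i> * circ \<phi>)) (at (of_real \<phi>))"
    unfolding circ_def by (auto intro!: derivative_eq_intros)
  from has_vector_derivative_real_field[OF this]
  have "(circ has_vector_derivative (\<i> * circ \<phi>)) (at \<phi>)"
    unfolding circ_def[abs_def] by simp
  moreover have "(g has_field_derivative deriv g (circ \<phi>)) (at (circ \<phi>))"
    using holomorphic_derivI[OF assms open_ball circ_in_ball] by simp
  ultimately show ?thesis
    using field_vector_diff_chain_at by (fastforce simp: o_def)
qed

lemma curve_has_vector_derivative: "(curve has_vector_derivative (\<i> * normal \<phi>)) (at \<phi>)"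
proof -
  have "((\<lambda>\<phi>. s (circ \<phi>) + cnj (t (circ \<phi>))) has_vector_derivative
      (\<i> * circ \<phi> * deriv s (circ \<phi>) + cnj (\<i> * circ \<phi> * deriv t (circ \<phi>)))) (at \<phi>)"
    by (intro has_vector_derivative_add has_vector_derivative_cnj has_vector_derivative_comp_circ
        hol_s hol_t)
  then show ?thesis
    unfolding curve_def[abs_def] harm_def normal_def
    by (rule has_vector_derivative_eq_rhs) (simp add: algebra_simps)
qed

lemma normal_has_vector_derivative: "(normal has_vector_derivative (\<i> * normal_rate \<phi>)) (at \<phi>)"
proof -
  have "deriv s holomorphic_on ball 0 1" "deriv t holomorphic_on ball 0 1"
    using hol_s hol_t by (auto intro: holomorphic_intros)
  moreover have "(circ has_vector_derivative (\<i> * circ \<phi>)) (at \<phi>)"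
    using has_vector_derivative_comp_circ[of "\<lambda>z. z"] by simp
  ultimately have "((\<lambda>\<phi>. circ \<phi> * deriv s (circ \<phi>) - cnj (circ \<phi> * deriv t (circ \<phi>))) has_vector_derivative
      (circ \<phi> * (\<i> * circ \<phi> * deriv (deriv s) (circ \<phi>)) + \<i> * circ \<phi> * deriv s (circ \<phi>)
       - cnj (circ \<phi> * (\<i> * circ \<phi> * deriv (deriv t) (circ \<phi>)) + \<i> * circ \<phi> * deriv t (circ \<phi>)))) (at \<phi>)"
    by (intro has_vector_derivative_diff has_vector_derivative_cnj has_vector_derivative_mult
        has_vector_derivative_comp_circ)
  then show ?thesis
    unfolding normal_def[abs_def] normal_rate_def
    by (rule has_vector_derivative_eq_rhs) (simp add: algebra_simps power2_eq_square)
qed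

lemma Re_normal_div_circ_pos: "Re (normal \<phi> / circ \<phi>) > 0"
proof -
  define z where "z = circ \<phi>"
  have "cmod z = \<rho>"
    unfolding z_def by (rule norm_circ)
  then have "z \<noteq> 0"
    using \<rho> by auto
  define u v where "u = z * deriv s z - z" and "v = z * deriv t z"
  have "normal \<phi> / z - 1 = u / z - cnj v / z"
    unfolding normal_def z_def[symmetric] u_def v_def using \<open>z \<noteq> 0\<close> by (simp add: field_simps)
  then have "cmod (normal \<phi> / z - 1) \<le> (cmod u + cmod v) / \<rho>"
    using norm_triangle_ineq4[of "u / z" "cnj v / z"] \<open>cmod z = \<rho>\<close>
    by (simp only: norm_divide complex_mod_cnj add_divide_distrib)
  also have "\<dots> < 1"
  proof -
    have "cmod u + cmod v < \<rho>"
      using small[OF \<open>cmod z = \<rho>\<close>] norm_ge_zero[of "z^2 * deriv (deriv s) z"]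
        norm_ge_zero[of "z^2 * deriv (deriv t) z"]
      unfolding u_def v_def by linarith
    then show ?thesis using \<rho> by (simp add: divide_less_eq)
  qed
  finally have "cmod (normal \<phi> / z - 1) < 1" .
  then show ?thesis
    using abs_Re_le_cmod[of "normal \<phi> / z - 1"] unfolding z_def by simp
qed

lemma normal_nonzero: "normal \<phi> \<noteq> 0"
  using Re_normal_div_circ_pos[of \<phi>] by auto

lemma Re_normal_rate_cnj_normal_pos: "Re (normal_rate \<phi> * cnj (normal \<phi>)) > 0"
proof -
  define z where "z = circ \<phi>"
  have "cmod z = \<rho>" unfolding z_def by (rule norm_circ)
  define u1 u2 v1 v2 where "u1 = z * deriv s z - z" and "u2 = z^2 * deriv (deriv s) z"
    and "v1 = z * deriv t z" and "v2 = z^2 * deriv (deriv t) z"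
  have sum: "normal_rate \<phi> + normal \<phi> = 2 * z + (2 * u1 + u2 + cnj v2)"
    and diff: "normal_rate \<phi> - normal \<phi> = u2 + cnj (2 * v1 + v2)"
    unfolding normal_rate_def normal_def z_def[symmetric] u1_def u2_def v1_def v2_def by simp_all
  have "cmod (2 * u1 + u2 + cnj v2) \<le> cmod (2 * u1 + u2) + cmod v2"
    using norm_triangle_ineq[of "2 * u1 + u2" "cnj v2"] by simp
  also have "\<dots> \<le> 2 * cmod u1 + cmod u2 + cmod v2"
    using norm_triangle_ineq[of "2 * u1" u2] by (simp add: norm_mult)
  finally have "2 * \<rho> - (2 * cmod u1 + cmod u2 + cmod v2) \<le> cmod (normal_rate \<phi> + normal \<phi>)"
    using norm_diff_ineq[of "2 * z" "2 * u1 + u2 + cnj v2"] \<open>cmod z = \<rho>\<close> unfolding sum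
    by (simp add: norm_mult)
  moreover have "cmod (normal_rate \<phi> - normal \<phi>) \<le> cmod u2 + cmod (2 * v1 + v2)"
    using norm_triangle_ineq[of u2 "cnj (2 * v1 + v2)"] unfolding diff by (simp only: complex_mod_cnj)
  moreover have "cmod (2 * v1 + v2) \<le> 2 * cmod v1 + cmod v2"
    using norm_triangle_ineq[of "2 * v1" v2] by (simp add: norm_mult)
  moreover have "cmod u1 + cmod u2 + cmod v1 + cmod v2 < \<rho>"
    using small[OF \<open>cmod z = \<rho>\<close>] unfolding u1_def u2_def v1_def v2_def .
  ultimately have "cmod (normal_rate \<phi> - normal \<phi>) < cmod (normal_rate \<phi> + normal \<phi>)"
    by linarith
  then show ?thesis
    using norm_diff_less_norm_add_iff by blast
qed

text \<open>Since normal / circ has positive real part, its principal logarithm is smooth along the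
  circle, and normal_angle is a continuous argument of normal.\<close>

definition log_normal :: "real \<Rightarrow> complex" where
  "log_normal \<phi> = \<i> * of_real \<phi> + Ln (normal \<phi> * (exp (- (\<i> * of_real \<phi>)) / of_real \<rho>))"

definition normal_angle :: "real \<Rightarrow> real" where
  "normal_angle \<phi> = Im (log_normal \<phi>)"

lemma exp_log_normal: "exp (log_normal \<phi>) = normal \<phi> / of_real \<rho>"
proof -
  have "normal \<phi> * (exp (- (\<i> * of_real \<phi>)) / of_real \<rho>) = normal \<phi> / circ \<phi>"
    using \<rho> by (simp add: circ_def exp_minus field_simps)
  then have "normal \<phi> * (exp (- (\<i> * of_real \<phi>)) / of_real \<rho>) \<noteq> 0"
    using Re_normal_div_circ_pos[of \<phi>] by auto
  then show ?thesis
    unfolding log_normal_def by (simp add: exp_add exp_minus field_simps)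
qed

lemma normal_polar: "normal \<phi> = of_real (\<rho> * exp (Re (log_normal \<phi>))) * cis (normal_angle \<phi>)"
  using exp_log_normal[of \<phi>] \<rho> unfolding normal_angle_def exp_eq_polar by (simp add: field_simps)

lemma log_normal_has_vector_derivative:
  "(log_normal has_vector_derivative (\<i> * normal_rate \<phi> / normal \<phi>)) (at \<phi>)"
proof -
  define W where "W \<phi> = normal \<phi> * (exp (- (\<i> * of_real \<phi>)) / of_real \<rho>)" for \<phi>
  have W_eq: "W \<phi> = normal \<phi> / circ \<phi>" for \<phi>
    using \<rho> by (simp add: W_def circ_def exp_minus field_simps)
  have "((\<lambda>w. exp (- (\<i> * w)) / of_real \<rho>) has_field_derivative (- \<i> * exp (- (\<i> * of_real \<phi>)) / of_real \<rho>))
      (at (of_real \<phi>))"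
    using \<rho> by (auto intro!: derivative_eq_intros)
  from has_vector_derivative_mult[OF normal_has_vector_derivative has_vector_derivative_real_field[OF this]]
  have "(W has_vector_derivative (\<i> * (normal_rate \<phi> - normal \<phi>) * exp (- (\<i> * of_real \<phi>)) / of_real \<rho>))
      (at \<phi>)"
    unfolding W_def[abs_def] by (rule has_vector_derivative_eq_rhs) (use \<rho> in \<open>simp add: field_simps\<close>)
  moreover have "W \<phi> \<notin> \<real>\<^sub>\<le>\<^sub>0"
    using Re_normal_div_circ_pos[of \<phi>] unfolding W_eq by (auto simp: complex_nonpos_Reals_iff)
  ultimately have "((\<lambda>\<phi>. Ln (W \<phi>)) has_vector_derivative
      (\<i> * (normal_rate \<phi> - normal \<phi>) * exp (- (\<i> * of_real \<phi>)) / of_real \<rho> * inverse (W \<phi>))) (at \<phi>)"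
    using field_vector_diff_chain_at has_field_derivative_Ln by (fastforce simp: o_def)
  moreover have "((\<lambda>\<phi>. \<i> * of_real \<phi>) has_vector_derivative \<i>) (at \<phi>)"
    using has_vector_derivative_real_field[of "\<lambda>w. \<i> * w" \<i> \<phi>] by (auto intro!: derivative_eq_intros)
  ultimately have "(log_normal has_vector_derivative
      (\<i> + \<i> * (normal_rate \<phi> - normal \<phi>) * exp (- (\<i> * of_real \<phi>)) / of_real \<rho> * inverse (W \<phi>))) (at \<phi>)"
    unfolding log_normal_def[abs_def] W_def[symmetric] by (intro has_vector_derivative_add)
  then show ?thesis
    by (rule has_vector_derivative_eq_rhs)
       (use normal_nonzero[of \<phi>] \<rho> in \<open>simp add: W_def field_simps exp_minus\<close>)
qed

lemma normal_angle_has_real_derivative: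
  "(normal_angle has_real_derivative Re (normal_rate \<phi> / normal \<phi>)) (at \<phi>)"
  using has_field_derivative_Im[OF log_normal_has_vector_derivative[of \<phi>]]
  unfolding normal_angle_def[abs_def] by (simp add: times_divide_eq_right[symmetric] del: times_divide_eq_right)

lemma normal_angle_increasing:
  assumes "a < b"
  shows "normal_angle a < normal_angle b"
proof (rule DERIV_pos_imp_increasing[OF assms])
  fix \<phi>
  have "Re (normal_rate \<phi> / normal \<phi>) = Re (normal_rate \<phi> * cnj (normal \<phi>)) / (cmod (normal \<phi>))^2"
    by (simp add: Re_divide cmod_power2)
  then have "Re (normal_rate \<phi> / normal \<phi>) > 0"
    using Re_normal_rate_cnj_normal_pos[of \<phi>] normal_nonzero[of \<phi>] by simp
  then show "\<exists>y. DERIV normal_angle \<phi> :> y \<and> 0 < y"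
    using normal_angle_has_real_derivative by blast
qed

lemma normal_angle_full_turn: "normal_angle (\<phi> + 2 * pi) = normal_angle \<phi> + 2 * pi"
proof -
  have "exp (- (\<i> * of_real (\<phi> + 2 * pi))) = exp (- (\<i> * of_real \<phi>))"
    using exp_two_pi_i by (simp add: distrib_left exp_diff ac_simps)
  moreover have "normal (\<phi> + 2 * pi) = normal \<phi>"
    unfolding normal_def circ_periodic ..
  ultimately show ?thesis
    unfolding normal_angle_def log_normal_def by simp
qed

lemma curve_periodic: "curve (\<phi> + 2 * pi) = curve \<phi>"
  unfolding curve_def circ_periodic ..

lemma curve_supporting: "0 < u \<Longrightarrow> u < 2 * pi \<Longrightarrow> normal \<theta> \<bullet> (curve (\<theta> + u) - curve \<theta>) < 0"
  using supporting_if_normal_angle_increasing[OF curve_periodic curve_has_vector_derivative normal_polar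
      _ normal_angle_increasing normal_angle_full_turn] \<rho>
  by simp

sublocale curve: strictly_supported_curve curve normal
  by unfold_locales (rule curve_periodic curve_has_vector_derivative curve_supporting; assumption)+

lemma harm_sphere_convex_curve:
  "inj_on (harm s t) (sphere 0 \<rho>) \<and> convex_curve (harm s t ` sphere 0 \<rho>)"
proof
  show "inj_on (harm s t) (sphere 0 \<rho>)"
    unfolding sphere_eq_image_circ
    using curve.inj_on_period by (intro inj_on_imageI) (simp add: curve_def[abs_def] o_def)
  have "harm s t ` sphere 0 \<rho> = curve ` {0..<2 * pi}"
    unfolding sphere_eq_image_circ image_image curve_def ..
  then have "harm s t ` sphere 0 \<rho> = range curve"
    using curve.range_eq_image_period by simp
  then show "convex_curve (harm s t ` sphere 0 \<rho>)"
    using curve.convex_curve_range by simp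
qed

end

theorem theorem21:
  fixes \<gamma> \<delta> lam :: real and s t :: "complex \<Rightarrow> complex"
  assumes "0 \<le> lam" "lam < \<gamma>" "\<gamma> \<le> \<delta>"
    and "RH0 \<gamma> \<delta> lam s t"
  shows "(\<exists>!r. 0 < r \<and> r < 1 \<and> pc \<gamma> \<delta> lam r = 0) \<and>
         (\<forall>r. 0 < r \<and> r < 1 \<and> pc \<gamma> \<delta> lam r = 0 \<longrightarrow> fully_convex_in (harm s t) r)"
proof (intro conjI allI impI)
  show "\<exists>!r. 0 < r \<and> r < 1 \<and> pc \<gamma> \<delta> lam r = 0"
    using pc_unique_root assms(1-3) by blast
  fix r assume r: "0 < r \<and> r < 1 \<and> pc \<gamma> \<delta> lam r = 0"
  have "s holomorphic_on ball 0 1" "t holomorphic_on ball 0 1"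
    using assms(4) unfolding RH0_def H0_def by auto
  moreover have "0 < pc \<gamma> \<delta> lam \<rho>" if "0 < \<rho>" "\<rho> < r" for \<rho>
    using pc_strict_decreasing[of lam \<gamma> \<delta> \<rho> r] assms r that by auto
  ultimately have "small_distortion_circle s t \<rho>" if "0 < \<rho>" "\<rho> < r" for \<rho>
    using that r RH0_boundary_terms_less[OF assms] by unfold_locales auto
  then show "fully_convex_in (harm s t) r"
    unfolding fully_convex_in_def using small_distortion_circle.harm_sphere_convex_curve by blast
qed

end
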